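(* Let $B$ be a supersoluble brace, and let $C$ be a maximal subbrace of $B$ (a proper subbrace not properly contained in any proper subbrace). Then $|B:C|$ is a prime number. In particular, $(C,+)$ (resp. $(C,\cdot)$) is a maximal subgroup of $(B,+)$ (resp. $(B,\cdot)$) of prime index.
   Context: A brace (skew left brace) is a set $B$ with two binary operations $+$ and $\cdot$ such that $(B,+)$ and $(B,\cdot)$ are groups and $a(b+c)=ab-a+ac$ for all $a,b,c\in B$. A subbrace is a subset that is a subgroup of both groups. $\lambda_a(b)=-a+ab$ defines a homomorphism $\lambda\colon(B,\cdot)\to\operatorname{Aut}(B,+)$. An ideal is a subbrace normal in both groups and invariant under all $\lambda_b$; quotients by ideals are braces. $\operatorname{Soc}(B)=\operatorname{Ker}\lambda\cap Z(B,+)$. $B$ is supersoluble if there is a finite chain of ideals $\{0\}=I_0\le\dots\le I_n=B$ such that for each $i$, either $(I_{i+1}/I_i,+)$ is infinite cyclic and $I_{i+1}/I_i\le\operatorname{Soc}(B/I_i)$, or $I_{i+1}/I_i$ has prime order. For a subbrace $C$, if $|(B,+):(C,+)|$ and $|(B,\cdot):(C,\cdot)|$ are both finite and equal to $n$, the index $|B:C|$ is defined to be $n$. *)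

theory Defs
  imports "HOL-Algebra.Algebra" "HOL-Computational_Algebra.Primes"
begin

text \<open>A (skew left) brace is given by two group structures A (the additive group (B,+))
  and M (the multiplicative group (B,.)) on the same carrier, satisfying
  a(b+c) = ab - a + ac.\<close>

definition skew_brace :: "'a monoid \<Rightarrow> 'a monoid \<Rightarrow> bool" where
  "skew_brace A M \<longleftrightarrow> group A \<and> group M \<and> carrier A = carrier M \<and>
     (\<forall>a\<in>carrier A. \<forall>b\<in>carrier A. \<forall>c\<in>carrier A.
        a \<otimes>\<^bsub>M\<^esub> (b \<otimes>\<^bsub>A\<^esub> c)
        = (a \<otimes>\<^bsub>M\<^esub> b) \<otimes>\<^bsub>A\<^esub> (inv\<^bsub>A\<^esub> a) \<otimes>\<^bsub>A\<^esub> (a \<otimes>\<^bsub>M\<^esub> c))"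

definition brace_lambda :: "'a monoid \<Rightarrow> 'a monoid \<Rightarrow> 'a \<Rightarrow> 'a \<Rightarrow> 'a" where
  "brace_lambda A M a b = (inv\<^bsub>A\<^esub> a) \<otimes>\<^bsub>A\<^esub> (a \<otimes>\<^bsub>M\<^esub> b)"

definition subbrace :: "'a monoid \<Rightarrow> 'a monoid \<Rightarrow> 'a set \<Rightarrow> bool" where
  "subbrace A M C \<longleftrightarrow> subgroup C A \<and> subgroup C M"

definition brace_ideal :: "'a monoid \<Rightarrow> 'a monoid \<Rightarrow> 'a set \<Rightarrow> bool" where
  "brace_ideal A M I \<longleftrightarrow> subbrace A M I \<and> I \<lhd> A \<and> I \<lhd> M \<and>
     (\<forall>b\<in>carrier A. \<forall>x\<in>I. brace_lambda A M b x \<in> I)"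

definition brace_socle :: "'a monoid \<Rightarrow> 'a monoid \<Rightarrow> 'a set" where
  "brace_socle A M = {a \<in> carrier A. (\<forall>b\<in>carrier A. brace_lambda A M a b = b) \<and>
                                      (\<forall>b\<in>carrier A. a \<otimes>\<^bsub>A\<^esub> b = b \<otimes>\<^bsub>A\<^esub> a)}"

text \<open>The quotient brace B/I is (A Mod I, M Mod I); for an ideal I the additive and
  multiplicative cosets coincide, so both have the same carrier.
  The image J/I of a subset J of B in B/I:\<close>
definition brace_quot_set :: "'a monoid \<Rightarrow> 'a set \<Rightarrow> 'a set \<Rightarrow> 'a set set" where
  "brace_quot_set A I J = (\<lambda>a. I #>\<^bsub>A\<^esub> a) ` J"

definition infinite_cyclic_subset :: "('b, 'c) monoid_scheme \<Rightarrow> 'b set \<Rightarrow> bool" where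
  "infinite_cyclic_subset G S \<longleftrightarrow> infinite S \<and>
     (\<exists>g\<in>S. S = range (\<lambda>k::int. g [^]\<^bsub>G\<^esub> k))"

definition supersoluble_brace :: "'a monoid \<Rightarrow> 'a monoid \<Rightarrow> bool" where
  "supersoluble_brace A M \<longleftrightarrow>
     (\<exists>(I :: nat \<Rightarrow> 'a set) (n :: nat).
        I 0 = {\<one>\<^bsub>A\<^esub>} \<and> I n = carrier A \<and>
        (\<forall>i\<le>n. brace_ideal A M (I i)) \<and>
        (\<forall>i<n. I i \<subseteq> I (Suc i) \<and>
           ((infinite_cyclic_subset (A Mod (I i)) (brace_quot_set A (I i) (I (Suc i))) \<and>
             brace_quot_set A (I i) (I (Suc i)) \<subseteq> brace_socle (A Mod (I i)) (M Mod (I i)))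
            \<or> Factorial_Ring.prime (card (brace_quot_set A (I i) (I (Suc i)))))))"

definition maximal_subbrace :: "'a monoid \<Rightarrow> 'a monoid \<Rightarrow> 'a set \<Rightarrow> bool" where
  "maximal_subbrace A M C \<longleftrightarrow> subbrace A M C \<and> C \<noteq> carrier A \<and>
     (\<forall>D. subbrace A M D \<and> C \<subseteq> D \<and> D \<noteq> carrier A \<longrightarrow> D = C)"

definition maximal_subgroup :: "'a set \<Rightarrow> 'a monoid \<Rightarrow> bool" where
  "maximal_subgroup H G \<longleftrightarrow> subgroup H G \<and> H \<noteq> carrier G \<and>
     (\<forall>K. subgroup K G \<and> H \<subseteq> K \<longrightarrow> K = H \<or> K = carrier G)"

end

(*
  Let {0} = I_0 <= ... <= I_n = B be a supersoluble series and let N = I_(j+1) be its first term not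
  contained in C, so that K = I_j <= C. Then C + N is a subbrace properly containing C, hence equal
  to B, and the indices of C in (B,+) and (B,.) are those of D = C intersect N in N.
  If N/K has prime order, then D = K and the index is |N/K|. If N/K is infinite cyclic, generated
  by xK, and contained in Soc(B/K), then {k. x^k in C} = mZ; for a divisor q > 1 of m the preimage
  J_q of <x^q K> is an ideal, and C + J_q misses x, so maximality gives x^q in C and q = m: the
  index m is prime. In both cases the additive and multiplicative cosets of D in N coincide, so
  the two indices agree. Finally, indices multiply along chains of subgroups, so a subgroup of
  prime index is maximal.
*)

theory Submission
  imports Defs
begin

section \<open>Indices of subgroups\<close>

lemma (in group) rcos_eq_iff:
  assumes "subgroup H G" "x \<in> carrier G" "y \<in> carrier G"
  shows "H #> x = H #> y \<longleftrightarrow> x \<otimes> inv y \<in> H"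
  using assms coset_join1 coset_join2 coset_mult_inv1 coset_mult_inv2 subgroup.subset
  by (metis inv_closed m_closed)

lemma (in group) rcos_inter_subgroup:
  assumes H: "subgroup H G" and N: "subgroup N G" and n: "n \<in> N"
  shows "(H #> n) \<inter> N = (H \<inter> N) #> n"
proof -
  have "h \<otimes> n \<in> N \<longleftrightarrow> h \<in> N" if "h \<in> H" for h
    using that n H N
    by (metis inv_solve_right subgroup.m_closed subgroup.m_inv_closed subgroup.mem_carrier)
  then show ?thesis unfolding r_coset_def by blast
qed

lemma (in group) card_rcosets_eq_card_rcosets_inter:
  assumes H: "subgroup H G" and N: "subgroup N G" and HN: "H <#> N = carrier G"
  shows "card (rcosets H) = card ((\<lambda>n. (H \<inter> N) #> n) ` N)"
proof -
  have rcosets_H: "rcosets H = (\<lambda>n. H #> n) ` N"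
  proof
    show "(\<lambda>n. H #> n) ` N \<subseteq> rcosets H"
      using H N by (auto intro!: rcosetsI dest: subgroup.subset)
    show "rcosets H \<subseteq> (\<lambda>n. H #> n) ` N"
    proof
      fix Q assume "Q \<in> rcosets H"
      then obtain g where "g \<in> H <#> N" "Q = H #> g"
        using HN unfolding RCOSETS_def by blast
      then obtain h n where hn: "h \<in> H" "n \<in> N" "Q = H #> (h \<otimes> n)"
        unfolding set_mult_def by blast
      have hG: "h \<in> carrier G" and nG: "n \<in> carrier G"
        using subgroup.mem_carrier[OF H hn(1)] subgroup.mem_carrier[OF N hn(2)] .
      have "Q = (H #> h) #> n"
        using hn coset_mult_assoc[OF subgroup.subset[OF H] hG nG] by simp
      also have "H #> h = H"
        using coset_join2[OF hG H hn(1)] .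
      finally show "Q \<in> (\<lambda>n. H #> n) ` N" using hn by blast
    qed
  qed
  have "inj_on (\<lambda>S. S \<inter> N) ((\<lambda>n. H #> n) ` N)"
  proof (rule inj_onI, clarify)
    fix n n' assume n: "n \<in> N" "n' \<in> N" and eq: "(H #> n) \<inter> N = (H #> n') \<inter> N"
    have nG: "n \<in> carrier G" and n'G: "n' \<in> carrier G"
      using subgroup.mem_carrier[OF N n(1)] subgroup.mem_carrier[OF N n(2)] .
    have "n \<in> H #> n'"
      using eq n(1) rcos_self[OF nG H] by blast
    then show "H #> n = H #> n'"
      using repr_independence[OF _ n'G H] by simp
  qed
  moreover have "(\<lambda>S. S \<inter> N) ` (\<lambda>n. H #> n) ` N = (\<lambda>n. (H \<inter> N) #> n) ` N"
    using rcos_inter_subgroup[OF H N] by (simp add: image_image)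
  ultimately show ?thesis
    using rcosets_H card_image by metis
qed

lemma (in group) rcosets_within_rcos:
  assumes H: "subgroup H G" and K: "subgroup K G" and HK: "H \<subseteq> K" and g: "g \<in> carrier G"
  shows "{Q \<in> rcosets H. Q \<subseteq> K #> g} = (\<lambda>Q. Q #> g) ` ((\<lambda>k. H #> k) ` K)"
proof
  have HG: "H \<subseteq> carrier G" and KG: "K \<subseteq> carrier G"
    using subgroup.subset[OF H] subgroup.subset[OF K] .
  show "{Q \<in> rcosets H. Q \<subseteq> K #> g} \<subseteq> (\<lambda>Q. Q #> g) ` ((\<lambda>k. H #> k) ` K)"
  proof clarify
    fix Q assume "Q \<in> rcosets H" "Q \<subseteq> K #> g"
    then obtain a where a: "a \<in> carrier G" "Q = H #> a" "H #> a \<subseteq> K #> g"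
      unfolding RCOSETS_def by blast
    then have "a \<in> K #> g" using rcos_self[OF a(1) H] by blast
    then obtain k where k: "k \<in> K" "a = k \<otimes> g"
      unfolding r_coset_def by blast
    then have "Q = (H #> k) #> g"
      using a(2) coset_mult_assoc[OF HG _ g] KG by auto
    with k show "Q \<in> (\<lambda>Q. Q #> g) ` ((\<lambda>k. H #> k) ` K)" by blast
  qed
  show "(\<lambda>Q. Q #> g) ` ((\<lambda>k. H #> k) ` K) \<subseteq> {Q \<in> rcosets H. Q \<subseteq> K #> g}"
  proof
    fix Q assume "Q \<in> (\<lambda>Q. Q #> g) ` ((\<lambda>k. H #> k) ` K)"
    then obtain k where k: "k \<in> K" and Q: "Q = H #> k #> g" by blast
    then have kG: "k \<in> carrier G" using KG by blast
    have "H #> (k \<otimes> g) \<subseteq> K #> g"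
    proof
      fix y assume "y \<in> H #> (k \<otimes> g)"
      then obtain h where h: "h \<in> H" "y = h \<otimes> (k \<otimes> g)" unfolding r_coset_def by blast
      moreover have "h \<otimes> k \<in> K" using h(1) HK k subgroup.m_closed[OF K] by blast
      moreover have "h \<otimes> (k \<otimes> g) = (h \<otimes> k) \<otimes> g"
        using h(1) HG kG g by (simp add: m_assoc subset_iff)
      ultimately show "y \<in> K #> g" unfolding r_coset_def by auto
    qed
    then show "Q \<in> {Q \<in> rcosets H. Q \<subseteq> K #> g}"
      using Q coset_mult_assoc[OF HG kG g] rcosetsI[OF HG m_closed[OF kG g]] by auto
  qed
qed

lemma (in group) card_rcosets_within_rcos:
  assumes H: "subgroup H G" and K: "subgroup K G" and HK: "H \<subseteq> K" and g: "g \<in> carrier G"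
  shows "card {Q \<in> rcosets H. Q \<subseteq> K #> g} = card ((\<lambda>k. H #> k) ` K)"
proof -
  have "inj_on (\<lambda>Q. Q #> g) ((\<lambda>k. H #> k) ` K)"
  proof (rule inj_on_inverseI)
    fix Q assume "Q \<in> (\<lambda>k. H #> k) ` K"
    then have "Q \<subseteq> carrier G"
      using subgroup.subset[OF H] subgroup.subset[OF K] r_coset_subset_G by blast
    then show "Q #> g #> inv g = Q" using g by (simp add: coset_mult_assoc)
  qed
  then show ?thesis using rcosets_within_rcos[OF assms] card_image by simp
qed

(* The cosets of H are grouped by the coset of K containing them; each group is a translate of
   the cosets of H inside K. *)
lemma (in group) card_rcosets_mult:
  assumes H: "subgroup H G" and K: "subgroup K G" and HK: "H \<subseteq> K"
    and fin: "finite (rcosets H)"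
  shows "card (rcosets H) = card (rcosets K) * card ((\<lambda>k. H #> k) ` K)"
proof -
  define block where "block Y = {Q \<in> rcosets H. Q \<subseteq> Y}" for Y
  have HG: "H \<subseteq> carrier G" and KG: "K \<subseteq> carrier G"
    using subgroup.subset[OF H] subgroup.subset[OF K] .
  have block_self: "H #> g \<in> block (K #> g)" if g: "g \<in> carrier G" for g
    using rcosetsI[OF HG g] HK unfolding block_def r_coset_def by auto
  have block_overlap: "Y = Y'"
    if Y: "Y \<in> rcosets K" "Y' \<in> rcosets K" and Q: "Q \<in> block Y" "Q \<in> block Y'" for Y Y' Q
  proof -
    obtain a where "a \<in> carrier G" "Q = H #> a"
      using Q(1) unfolding block_def RCOSETS_def by blast
    then have "a \<in> Y \<inter> Y'"
      using Q rcos_self[OF _ H] unfolding block_def by blast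
    then show ?thesis
      using Y rcos_disjoint[OF K] unfolding pairwise_def disjnt_def by blast
  qed
  have union: "\<Union> (block ` (rcosets K)) = rcosets H"
  proof
    show "rcosets H \<subseteq> \<Union> (block ` (rcosets K))"
      using block_self unfolding RCOSETS_def by blast
  qed (auto simp: block_def)
  have card_block: "card (block Y) = card ((\<lambda>k. H #> k) ` K)" if "Y \<in> rcosets K" for Y
    using that card_rcosets_within_rcos[OF H K HK] unfolding block_def RCOSETS_def by auto
  have "inj_on block (rcosets K)"
  proof (rule inj_onI)
    fix Y Y' assume Y: "Y \<in> rcosets K" "Y' \<in> rcosets K" "block Y = block Y'"
    then obtain g where "g \<in> carrier G" "Y = K #> g" unfolding RCOSETS_def by blast
    then show "Y = Y'" using Y block_self block_overlap by metis
  qed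
  then have "card (block ` (rcosets K)) = card (rcosets K)" by (rule card_image)
  moreover have "card ((\<lambda>k. H #> k) ` K) * card (block ` (rcosets K)) = card (rcosets H)"
  proof (subst union[symmetric], rule card_partition)
    show "finite (\<Union> (block ` (rcosets K)))" using fin union by simp
    then show "finite (block ` (rcosets K))" by (rule finite_UnionD)
  qed (use card_block block_overlap in blast)+
  ultimately show ?thesis by (simp add: mult.commute)
qed

lemma (in group) maximal_if_prime_index:
  assumes C: "subgroup C G" and K: "subgroup K G" and CK: "C \<subseteq> K"
    and p: "Factorial_Ring.prime (card (rcosets C))"
  shows "K = C \<or> K = carrier G"
proof -
  have "finite (rcosets C)"
    using p card.infinite not_prime_0 by metis
  then have "card (rcosets K) = 1 \<or> card ((\<lambda>k. C #> k) ` K) = 1"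
    using p card_rcosets_mult[OF C K CK] prime_product by metis
  then show ?thesis
  proof
    assume card_K: "card (rcosets K) = 1"
    have "g \<in> K" if g: "g \<in> carrier G" for g
    proof -
      have "K #> g \<in> rcosets K" using rcosetsI[OF subgroup.subset[OF K] g] .
      moreover have "K \<in> rcosets K" using subgroup.subgroup_in_rcosets[OF K is_group] .
      ultimately have "K #> g = K" using card_K by (metis card_1_singletonE singletonD)
      then show ?thesis using coset_join1[OF _ g K] by blast
    qed
    then show ?thesis using subgroup.subset[OF K] by blast
  next
    assume card_CK: "card ((\<lambda>k. C #> k) ` K) = 1"
    have "k \<in> C" if k: "k \<in> K" for k
    proof -
      have kG: "k \<in> carrier G" using subgroup.mem_carrier[OF K k] .
      have "C #> \<one> \<in> (\<lambda>k. C #> k) ` K" using subgroup.one_closed[OF K] by blast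
      moreover have "C #> k \<in> (\<lambda>k. C #> k) ` K" using k by blast
      ultimately have "C #> k = C #> \<one>" using card_CK by (metis card_1_singletonE singletonD)
      then have "C #> k = C" using coset_mult_one[OF subgroup.subset[OF C]] by simp
      then show ?thesis using coset_join1[OF _ kG C] by blast
    qed
    then show ?thesis using CK by blast
  qed
qed

lemma maximal_subgroup_if_prime_index:
  fixes G :: "'a monoid"
  assumes G: "group G" and C: "subgroup C G" and p: "Factorial_Ring.prime (card (rcosets\<^bsub>G\<^esub> C))"
  shows "maximal_subgroup C G"
proof -
  have "C \<noteq> carrier G"
  proof
    assume "C = carrier G"
    moreover have "\<one>\<^bsub>G\<^esub> \<in> carrier G" using monoid.one_closed[OF group.is_monoid[OF G]] .
    ultimately have "rcosets\<^bsub>G\<^esub> C = {carrier G}"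
      using group.coset_join2[OF G _ group.subgroup_self[OF G]] unfolding RCOSETS_def by auto
    with p show False by simp
  qed
  then show ?thesis
    unfolding maximal_subgroup_def using C group.maximal_if_prime_index[OF G C _ _ p] by blast
qed

lemma int_subgroup_mult_closed:
  fixes S :: "int set"
  assumes zero: "0 \<in> S" and add: "\<And>a b. a \<in> S \<Longrightarrow> b \<in> S \<Longrightarrow> a + b \<in> S"
    and neg: "\<And>a. a \<in> S \<Longrightarrow> - a \<in> S" and a: "a \<in> S"
  shows "a * t \<in> S"
proof -
  have mult_nat: "a * int n \<in> S" for n
    by (induction n) (use zero add a in \<open>auto simp: distrib_left\<close>)
  show ?thesis
  proof (cases "t \<ge> 0")
    case True
    then show ?thesis using mult_nat[of "nat t"] by simp
  next
    case False
    then show ?thesis using neg[OF mult_nat[of "nat (- t)"]] by simp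
  qed
qed

lemma int_subgroup_eq_multiples:
  fixes S :: "int set"
  assumes zero: "0 \<in> S" and add: "\<And>a b. a \<in> S \<Longrightarrow> b \<in> S \<Longrightarrow> a + b \<in> S"
    and neg: "\<And>a. a \<in> S \<Longrightarrow> - a \<in> S"
  shows "\<exists>m\<ge>0. S = {k. m dvd k}"
proof (cases "S \<subseteq> {0}")
  case True
  then have "S = {k. 0 dvd k}" using zero by auto
  then show ?thesis by blast
next
  case False
  have mult: "a * t \<in> S" if "a \<in> S" for a t
    by (rule int_subgroup_mult_closed[OF zero add neg that])
  define P where "P n \<longleftrightarrow> n > 0 \<and> int n \<in> S" for n
  obtain a where "a \<in> S" "a \<noteq> 0" using False by blast
  then have "P (nat \<bar>a\<bar>)" unfolding P_def using neg by (cases "a \<ge> 0") auto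
  then have P_least: "P (LEAST n. P n)" by (rule LeastI)
  define m where "m = int (LEAST n. P n)"
  have m_pos: "m > 0" and m_S: "m \<in> S" using P_least unfolding P_def m_def by auto
  have "S = {k. m dvd k}"
  proof
    show "S \<subseteq> {k. m dvd k}"
    proof
      fix k assume "k \<in> S"
      then have "k + m * (- (k div m)) \<in> S" using add mult[OF m_S] by blast
      then have mod_S: "k mod m \<in> S" by (simp add: minus_mult_div_eq_mod[of k m, symmetric])
      have "nat (k mod m) < (LEAST n. P n)"
        using m_pos unfolding m_def by (simp add: nat_less_iff)
      then have "\<not> P (nat (k mod m))" by (rule not_less_Least)
      then have "k mod m = 0" using mod_S m_pos unfolding P_def by auto
      then show "k \<in> {k. m dvd k}" by auto
    qed
    show "{k. m dvd k} \<subseteq> S" using mult[OF m_S] by auto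
  qed
  then show ?thesis using m_pos by (intro exI[of _ m]) auto
qed

lemma (in group) int_pow_mem_subgroup_iff_dvd:
  assumes H: "subgroup H G" and x: "x \<in> carrier G"
  obtains m :: int where "m \<ge> 0" "\<And>k. x [^] k \<in> H \<longleftrightarrow> m dvd k"
proof -
  have "\<exists>m\<ge>0. {k::int. x [^] k \<in> H} = {k. m dvd k}"
  proof (rule int_subgroup_eq_multiples)
    show "0 \<in> {k::int. x [^] k \<in> H}" using subgroup.one_closed[OF H] by simp
    show "a + b \<in> {k. x [^] k \<in> H}" if "a \<in> {k. x [^] k \<in> H}" "b \<in> {k. x [^] k \<in> H}" for a b :: int
      using that subgroup.m_closed[OF H] int_pow_mult[OF x, of a b] by simp
    show "- a \<in> {k. x [^] k \<in> H}" if "a \<in> {k. x [^] k \<in> H}" for a :: int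
      using that subgroup.m_inv_closed[OF H] int_pow_neg[OF x, of a] by simp
  qed
  then show ?thesis using that by blast
qed

section \<open>Braces and their ideals\<close>

locale brace =
  fixes A M :: "'a monoid"
  assumes skew_brace: "skew_brace A M"
begin

sublocale A: group A
  using skew_brace unfolding skew_brace_def by blast

sublocale M: group M
  using skew_brace unfolding skew_brace_def by blast

lemma carrier_M [simp]: "carrier M = carrier A"
  using skew_brace unfolding skew_brace_def by blast

lemma mult_M_closed [simp]: "a \<in> carrier A \<Longrightarrow> b \<in> carrier A \<Longrightarrow> a \<otimes>\<^bsub>M\<^esub> b \<in> carrier A"
  using M.m_closed by simp

lemma inv_M_closed [simp]: "a \<in> carrier A \<Longrightarrow> inv\<^bsub>M\<^esub> a \<in> carrier A"
  using M.inv_closed by simp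

lemma mult_add_distrib:
  assumes "a \<in> carrier A" "b \<in> carrier A" "c \<in> carrier A"
  shows "a \<otimes>\<^bsub>M\<^esub> (b \<otimes>\<^bsub>A\<^esub> c)
    = (a \<otimes>\<^bsub>M\<^esub> b) \<otimes>\<^bsub>A\<^esub> inv\<^bsub>A\<^esub> a \<otimes>\<^bsub>A\<^esub> (a \<otimes>\<^bsub>M\<^esub> c)"
  using skew_brace assms unfolding skew_brace_def by blast

lemma one_M [simp]: "\<one>\<^bsub>M\<^esub> = \<one>\<^bsub>A\<^esub>"
proof -
  have one: "\<one>\<^bsub>M\<^esub> \<in> carrier A" using M.one_closed by simp
  have "\<one>\<^bsub>A\<^esub> = \<one>\<^bsub>M\<^esub> \<otimes>\<^bsub>M\<^esub> (\<one>\<^bsub>A\<^esub> \<otimes>\<^bsub>A\<^esub> \<one>\<^bsub>A\<^esub>)"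
    by simp
  also have "\<dots> = \<one>\<^bsub>A\<^esub> \<otimes>\<^bsub>A\<^esub> inv\<^bsub>A\<^esub> \<one>\<^bsub>M\<^esub> \<otimes>\<^bsub>A\<^esub> \<one>\<^bsub>A\<^esub>"
    using mult_add_distrib[OF one A.one_closed A.one_closed] by simp
  finally have "inv\<^bsub>A\<^esub> \<one>\<^bsub>M\<^esub> = \<one>\<^bsub>A\<^esub>" using one by simp
  then show ?thesis using one A.inv_eq_1_iff by blast
qed

abbreviation lam :: "'a \<Rightarrow> 'a \<Rightarrow> 'a" where
  "lam \<equiv> brace_lambda A M"

lemma lam_closed [simp]: "a \<in> carrier A \<Longrightarrow> b \<in> carrier A \<Longrightarrow> lam a b \<in> carrier A"
  unfolding brace_lambda_def by simp

lemma mult_eq_add_lam: "a \<in> carrier A \<Longrightarrow> b \<in> carrier A \<Longrightarrow> a \<otimes>\<^bsub>M\<^esub> b = a \<otimes>\<^bsub>A\<^esub> lam a b"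
  unfolding brace_lambda_def by (simp add: A.m_assoc[symmetric])

lemma lam_add:
  assumes "a \<in> carrier A" "b \<in> carrier A" "c \<in> carrier A"
  shows "lam a (b \<otimes>\<^bsub>A\<^esub> c) = lam a b \<otimes>\<^bsub>A\<^esub> lam a c"
  unfolding brace_lambda_def using assms mult_add_distrib by (simp add: A.m_assoc)

lemma lam_hom: "a \<in> carrier A \<Longrightarrow> lam a \<in> hom A A"
  by (rule homI) (auto simp: lam_add)

lemma lam_inv_A: "a \<in> carrier A \<Longrightarrow> b \<in> carrier A \<Longrightarrow> lam a (inv\<^bsub>A\<^esub> b) = inv\<^bsub>A\<^esub> lam a b"
  using group_hom.hom_inv[of A A "lam a"] lam_hom A.is_group
  unfolding group_hom_def group_hom_axioms_def by blast

lemma lam_int_pow: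
  "a \<in> carrier A \<Longrightarrow> b \<in> carrier A \<Longrightarrow> lam a (b [^]\<^bsub>A\<^esub> (k::int)) = lam a b [^]\<^bsub>A\<^esub> k"
  using hom_int_pow[OF lam_hom] A.is_group by blast

lemma mult_inv_A:
  assumes a: "a \<in> carrier A" and b: "b \<in> carrier A"
  shows "a \<otimes>\<^bsub>M\<^esub> inv\<^bsub>A\<^esub> b = a \<otimes>\<^bsub>A\<^esub> inv\<^bsub>A\<^esub> (a \<otimes>\<^bsub>M\<^esub> b) \<otimes>\<^bsub>A\<^esub> a"
proof -
  have "a = a \<otimes>\<^bsub>M\<^esub> (b \<otimes>\<^bsub>A\<^esub> inv\<^bsub>A\<^esub> b)"
    using a b by simp
  also have "\<dots> = (a \<otimes>\<^bsub>M\<^esub> b \<otimes>\<^bsub>A\<^esub> inv\<^bsub>A\<^esub> a) \<otimes>\<^bsub>A\<^esub> (a \<otimes>\<^bsub>M\<^esub> inv\<^bsub>A\<^esub> b)"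
    by (rule mult_add_distrib[OF a b A.inv_closed[OF b]])
  finally have "a \<otimes>\<^bsub>M\<^esub> inv\<^bsub>A\<^esub> b = inv\<^bsub>A\<^esub> (a \<otimes>\<^bsub>M\<^esub> b \<otimes>\<^bsub>A\<^esub> inv\<^bsub>A\<^esub> a) \<otimes>\<^bsub>A\<^esub> a"
    using a b by (simp add: A.inv_solve_left)
  then show ?thesis using a b by (simp add: A.inv_mult_group A.m_assoc)
qed

lemma lam_mult:
  assumes a: "a \<in> carrier A" and b: "b \<in> carrier A" and x: "x \<in> carrier A"
  shows "lam a (lam b x) = lam (a \<otimes>\<^bsub>M\<^esub> b) x"
proof -
  have closed: "a \<otimes>\<^bsub>M\<^esub> b \<in> carrier A" "a \<otimes>\<^bsub>M\<^esub> (b \<otimes>\<^bsub>M\<^esub> x) \<in> carrier A"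
    using assms by simp_all
  have "lam a (lam b x)
      = inv\<^bsub>A\<^esub> a \<otimes>\<^bsub>A\<^esub> ((a \<otimes>\<^bsub>M\<^esub> inv\<^bsub>A\<^esub> b) \<otimes>\<^bsub>A\<^esub> inv\<^bsub>A\<^esub> a \<otimes>\<^bsub>A\<^esub> (a \<otimes>\<^bsub>M\<^esub> (b \<otimes>\<^bsub>M\<^esub> x)))"
    unfolding brace_lambda_def using mult_add_distrib assms by simp
  also have "\<dots> = inv\<^bsub>A\<^esub> a \<otimes>\<^bsub>A\<^esub> ((a \<otimes>\<^bsub>A\<^esub> inv\<^bsub>A\<^esub> (a \<otimes>\<^bsub>M\<^esub> b) \<otimes>\<^bsub>A\<^esub> a)
      \<otimes>\<^bsub>A\<^esub> inv\<^bsub>A\<^esub> a \<otimes>\<^bsub>A\<^esub> (a \<otimes>\<^bsub>M\<^esub> (b \<otimes>\<^bsub>M\<^esub> x)))"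
    using mult_inv_A a b by simp
  also have "\<dots> = inv\<^bsub>A\<^esub> (a \<otimes>\<^bsub>M\<^esub> b) \<otimes>\<^bsub>A\<^esub> (a \<otimes>\<^bsub>M\<^esub> (b \<otimes>\<^bsub>M\<^esub> x))"
    using a closed by (simp add: A.m_assoc) (metis A.inv_closed A.inv_solve_left A.m_closed)
  also have "\<dots> = lam (a \<otimes>\<^bsub>M\<^esub> b) x"
    unfolding brace_lambda_def using a b x by (simp add: M.m_assoc)
  finally show ?thesis .
qed

lemma lam_one: "b \<in> carrier A \<Longrightarrow> lam \<one>\<^bsub>A\<^esub> b = b"
  unfolding brace_lambda_def by simp

lemma lam_inv_M_lam: "a \<in> carrier A \<Longrightarrow> x \<in> carrier A \<Longrightarrow> lam (inv\<^bsub>M\<^esub> a) (lam a x) = x"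
  using lam_mult[of "inv\<^bsub>M\<^esub> a" a x] lam_one by simp

lemma lam_lam_inv_M: "a \<in> carrier A \<Longrightarrow> x \<in> carrier A \<Longrightarrow> lam a (lam (inv\<^bsub>M\<^esub> a) x) = x"
  using lam_mult[of a "inv\<^bsub>M\<^esub> a" x] lam_one by simp

lemma ideal_normal_A: "brace_ideal A M I \<Longrightarrow> I \<lhd> A"
  unfolding brace_ideal_def by blast

lemma ideal_normal_M: "brace_ideal A M I \<Longrightarrow> I \<lhd> M"
  unfolding brace_ideal_def by blast

lemma ideal_subgroup_A: "brace_ideal A M I \<Longrightarrow> subgroup I A"
  unfolding brace_ideal_def subbrace_def by blast

lemma ideal_subgroup_M: "brace_ideal A M I \<Longrightarrow> subgroup I M"
  unfolding brace_ideal_def subbrace_def by blast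

lemma ideal_subset: "brace_ideal A M I \<Longrightarrow> I \<subseteq> carrier A"
  using ideal_subgroup_A subgroup.subset by blast

lemma ideal_lam_closed: "brace_ideal A M I \<Longrightarrow> b \<in> carrier A \<Longrightarrow> x \<in> I \<Longrightarrow> lam b x \<in> I"
  unfolding brace_ideal_def by blast

lemma set_mult_ideal_eq:
  assumes S: "S \<subseteq> carrier A" and I: "brace_ideal A M I"
  shows "S <#>\<^bsub>A\<^esub> I = S <#>\<^bsub>M\<^esub> I"
proof
  show "S <#>\<^bsub>A\<^esub> I \<subseteq> S <#>\<^bsub>M\<^esub> I"
  proof
    fix z assume "z \<in> S <#>\<^bsub>A\<^esub> I"
    then obtain s i where si: "s \<in> S" "i \<in> I" "z = s \<otimes>\<^bsub>A\<^esub> i" unfolding set_mult_def by blast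
    have s: "s \<in> carrier A" and i: "i \<in> carrier A" using si S ideal_subset[OF I] by auto
    have "z = s \<otimes>\<^bsub>M\<^esub> lam (inv\<^bsub>M\<^esub> s) i"
      using si s i mult_eq_add_lam lam_lam_inv_M by simp
    moreover have "lam (inv\<^bsub>M\<^esub> s) i \<in> I" using ideal_lam_closed[OF I] s si(2) by simp
    ultimately show "z \<in> S <#>\<^bsub>M\<^esub> I" using si(1) unfolding set_mult_def by blast
  qed
  show "S <#>\<^bsub>M\<^esub> I \<subseteq> S <#>\<^bsub>A\<^esub> I"
  proof
    fix z assume "z \<in> S <#>\<^bsub>M\<^esub> I"
    then obtain s i where si: "s \<in> S" "i \<in> I" "z = s \<otimes>\<^bsub>M\<^esub> i" unfolding set_mult_def by blast
    have s: "s \<in> carrier A" and i: "i \<in> carrier A" using si S ideal_subset[OF I] by auto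
    have "z = s \<otimes>\<^bsub>A\<^esub> lam s i" using si s i mult_eq_add_lam by simp
    moreover have "lam s i \<in> I" using ideal_lam_closed[OF I s si(2)] .
    ultimately show "z \<in> S <#>\<^bsub>A\<^esub> I" using si(1) unfolding set_mult_def by blast
  qed
qed

lemma ideal_rcos_eq:
  assumes I: "brace_ideal A M I" and a: "a \<in> carrier A"
  shows "I #>\<^bsub>A\<^esub> a = I #>\<^bsub>M\<^esub> a"
proof -
  have "I #>\<^bsub>A\<^esub> a = {a} <#>\<^bsub>A\<^esub> I"
    using normal.coset_eq[OF ideal_normal_A[OF I]] a by (simp add: l_coset_eq_set_mult)
  also have "\<dots> = {a} <#>\<^bsub>M\<^esub> I" using set_mult_ideal_eq[OF _ I] a by simp
  also have "\<dots> = I #>\<^bsub>M\<^esub> a"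
    using normal.coset_eq[OF ideal_normal_M[OF I]] a by (simp add: l_coset_eq_set_mult)
  finally show ?thesis .
qed

lemma subbrace_set_mult_ideal:
  assumes C: "subbrace A M C" and I: "brace_ideal A M I"
  shows "subbrace A M (C <#>\<^bsub>A\<^esub> I)"
proof -
  have C_A: "subgroup C A" and C_M: "subgroup C M" using C unfolding subbrace_def by auto
  have "subgroup (C <#>\<^bsub>A\<^esub> I) A"
    using A.mult_norm_subgroup[OF ideal_normal_A[OF I] C_A] A.commut_normal[OF C_A ideal_normal_A[OF I]]
    by simp
  moreover have "subgroup (C <#>\<^bsub>M\<^esub> I) M"
    using M.mult_norm_subgroup[OF ideal_normal_M[OF I] C_M] M.commut_normal[OF C_M ideal_normal_M[OF I]]
    by simp
  ultimately show ?thesis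
    unfolding subbrace_def using set_mult_ideal_eq[OF subgroup.subset[OF C_A] I] by simp
qed

lemma subgroup_M_if_lam_closed:
  assumes J: "subgroup J A" and lam_J: "\<And>b x. b \<in> carrier A \<Longrightarrow> x \<in> J \<Longrightarrow> lam b x \<in> J"
  shows "subgroup J M"
proof (rule M.subgroupI)
  have J_carrier: "J \<subseteq> carrier A" using subgroup.subset[OF J] .
  then show "J \<subseteq> carrier M" by simp
  show "J \<noteq> {}" using subgroup.one_closed[OF J] by blast
  show "a \<otimes>\<^bsub>M\<^esub> b \<in> J" if "a \<in> J" "b \<in> J" for a b
    using that J_carrier mult_eq_add_lam lam_J subgroup.m_closed[OF J] by (metis subsetD)
  show "inv\<^bsub>M\<^esub> a \<in> J" if a_J: "a \<in> J" for a
  proof -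
    have a: "a \<in> carrier A" using a_J J_carrier by blast
    have "lam a (inv\<^bsub>M\<^esub> a) = inv\<^bsub>A\<^esub> a"
      unfolding brace_lambda_def using a by simp
    then have "inv\<^bsub>M\<^esub> a = lam (inv\<^bsub>M\<^esub> a) (inv\<^bsub>A\<^esub> a)"
      using lam_inv_M_lam[OF a inv_M_closed[OF a]] by simp
    then show ?thesis
      using lam_J[OF inv_M_closed[OF a] subgroup.m_inv_closed[OF J a_J]] by simp
  qed
qed

lemma socle_coset_mult_eq_add:
  assumes I: "brace_ideal A M I" and y: "y \<in> carrier A" and b: "b \<in> carrier A"
    and soc: "I #>\<^bsub>A\<^esub> y \<in> brace_socle (A Mod I) (M Mod I)"
  shows "I #>\<^bsub>A\<^esub> (y \<otimes>\<^bsub>M\<^esub> b) = I #>\<^bsub>A\<^esub> (y \<otimes>\<^bsub>A\<^esub> b)"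
proof -
  interpret Q: group "A Mod I" using normal.factorgroup_is_group[OF ideal_normal_A[OF I]] .
  have rcos_A: "(I #>\<^bsub>A\<^esub> a) \<otimes>\<^bsub>A Mod I\<^esub> (I #>\<^bsub>A\<^esub> c) = I #>\<^bsub>A\<^esub> (a \<otimes>\<^bsub>A\<^esub> c)"
    if "a \<in> carrier A" "c \<in> carrier A" for a c
    using normal.rcos_sum[OF ideal_normal_A[OF I]] that by simp
  have "(I #>\<^bsub>A\<^esub> y) \<otimes>\<^bsub>M Mod I\<^esub> (I #>\<^bsub>A\<^esub> b) = I #>\<^bsub>A\<^esub> (y \<otimes>\<^bsub>M\<^esub> b)"
    using normal.rcos_sum[OF ideal_normal_M[OF I]] ideal_rcos_eq[OF I] y b by simp
  moreover have "brace_lambda (A Mod I) (M Mod I) (I #>\<^bsub>A\<^esub> y) (I #>\<^bsub>A\<^esub> b) = I #>\<^bsub>A\<^esub> b"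
    using soc b unfolding brace_socle_def by (simp add: carrier_FactGroup)
  ultimately have "inv\<^bsub>A Mod I\<^esub> (I #>\<^bsub>A\<^esub> y) \<otimes>\<^bsub>A Mod I\<^esub> (I #>\<^bsub>A\<^esub> (y \<otimes>\<^bsub>M\<^esub> b))
      = I #>\<^bsub>A\<^esub> b"
    unfolding brace_lambda_def by simp
  moreover have "I #>\<^bsub>A\<^esub> a \<in> carrier (A Mod I)" if "a \<in> carrier A" for a
    using that by (simp add: carrier_FactGroup)
  ultimately have "I #>\<^bsub>A\<^esub> (y \<otimes>\<^bsub>M\<^esub> b) = (I #>\<^bsub>A\<^esub> y) \<otimes>\<^bsub>A Mod I\<^esub> (I #>\<^bsub>A\<^esub> b)"
    using Q.inv_solve_left y b by (metis mult_M_closed)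
  then show ?thesis using rcos_A y b by simp
qed

lemma socle_coset_add_commute:
  assumes I: "brace_ideal A M I" and y: "y \<in> carrier A" and b: "b \<in> carrier A"
    and soc: "I #>\<^bsub>A\<^esub> y \<in> brace_socle (A Mod I) (M Mod I)"
  shows "I #>\<^bsub>A\<^esub> (y \<otimes>\<^bsub>A\<^esub> b) = I #>\<^bsub>A\<^esub> (b \<otimes>\<^bsub>A\<^esub> y)"
proof -
  have "(I #>\<^bsub>A\<^esub> y) \<otimes>\<^bsub>A Mod I\<^esub> (I #>\<^bsub>A\<^esub> b) = (I #>\<^bsub>A\<^esub> b) \<otimes>\<^bsub>A Mod I\<^esub> (I #>\<^bsub>A\<^esub> y)"
    using soc b unfolding brace_socle_def by (simp add: carrier_FactGroup)
  then show ?thesis using normal.rcos_sum[OF ideal_normal_A[OF I]] y b by simp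
qed

lemma maximal_subbrace_mult_ideal:
  assumes C: "maximal_subbrace A M C" and I: "brace_ideal A M I" and IC: "\<not> I \<subseteq> C"
  shows "C <#>\<^bsub>A\<^esub> I = carrier A"
proof (rule ccontr)
  assume proper: "C <#>\<^bsub>A\<^esub> I \<noteq> carrier A"
  have C_sub: "subbrace A M C" and C_A: "subgroup C A"
    using C unfolding maximal_subbrace_def subbrace_def by auto
  have "C \<subseteq> C <#>\<^bsub>A\<^esub> I"
  proof
    fix c assume "c \<in> C"
    then have "c \<otimes>\<^bsub>A\<^esub> \<one>\<^bsub>A\<^esub> \<in> C <#>\<^bsub>A\<^esub> I"
      using subgroup.one_closed[OF ideal_subgroup_A[OF I]] unfolding set_mult_def by blast
    then show "c \<in> C <#>\<^bsub>A\<^esub> I" using \<open>c \<in> C\<close> subgroup.mem_carrier[OF C_A] by auto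
  qed
  then have "C <#>\<^bsub>A\<^esub> I = C"
    using C subbrace_set_mult_ideal[OF C_sub I] proper unfolding maximal_subbrace_def by blast
  moreover have "I \<subseteq> C <#>\<^bsub>A\<^esub> I"
  proof
    fix i assume "i \<in> I"
    then have "\<one>\<^bsub>A\<^esub> \<otimes>\<^bsub>A\<^esub> i \<in> C <#>\<^bsub>A\<^esub> I"
      using subgroup.one_closed[OF C_A] unfolding set_mult_def by blast
    then show "i \<in> C <#>\<^bsub>A\<^esub> I" using \<open>i \<in> I\<close> ideal_subset[OF I] by auto
  qed
  ultimately show False using IC by blast
qed

lemma inter_eq_if_prime_factor:
  assumes K: "brace_ideal A M K" and N: "brace_ideal A M N" and KN: "K \<subseteq> N"
    and p: "Factorial_Ring.prime (card (brace_quot_set A K N))"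
    and C: "subbrace A M C" and KC: "K \<subseteq> C" and NC: "\<not> N \<subseteq> C"
  shows "C \<inter> N = K"
proof -
  interpret N: group "A\<lparr>carrier := N\<rparr>"
    using subgroup.subgroup_is_group[OF ideal_subgroup_A[OF N] A.is_group] .
  have CN: "subgroup (C \<inter> N) A"
    using A.subgroups_Inter_pair C ideal_subgroup_A[OF N] unfolding subbrace_def by blast
  have "rcosets\<^bsub>A\<lparr>carrier := N\<rparr>\<^esub> K = brace_quot_set A K N"
    unfolding RCOSETS_def brace_quot_set_def by auto
  then have "C \<inter> N = K \<or> C \<inter> N = N"
    using N.maximal_if_prime_index[of K "C \<inter> N"] p KC KN
      A.subgroup_incl[OF ideal_subgroup_A[OF K] ideal_subgroup_A[OF N] KN]
      A.subgroup_incl[OF CN ideal_subgroup_A[OF N]]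
    by auto
  then show ?thesis using NC by blast
qed

end

section \<open>Central cyclic factors\<close>

locale central_cyclic_factor = brace +
  fixes K N :: "'a set" and x :: 'a
  assumes ideal_K: "brace_ideal A M K" and ideal_N: "brace_ideal A M N"
    and K_subset_N: "K \<subseteq> N" and x_in_N: "x \<in> N"
    and cosets_pow: "\<And>n. n \<in> N \<Longrightarrow> \<exists>k::int. K #>\<^bsub>A\<^esub> n = K #>\<^bsub>A\<^esub> (x [^]\<^bsub>A\<^esub> k)"
    and cosets_socle: "\<And>n. n \<in> N \<Longrightarrow> K #>\<^bsub>A\<^esub> n \<in> brace_socle (A Mod K) (M Mod K)"
begin

lemma x_carrier [simp]: "x \<in> carrier A"
  using x_in_N ideal_subset[OF ideal_N] by blast

lemma pow_in_N: "x [^]\<^bsub>A\<^esub> (k::int) \<in> N"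
  using A.subgroup_int_pow_closed[OF ideal_subgroup_A[OF ideal_N] x_in_N] .

lemma coset_K_eq_iff:
  "a \<in> carrier A \<Longrightarrow> b \<in> carrier A \<Longrightarrow> K #>\<^bsub>A\<^esub> a = K #>\<^bsub>A\<^esub> b \<longleftrightarrow> a \<otimes>\<^bsub>A\<^esub> inv\<^bsub>A\<^esub> b \<in> K"
  using A.rcos_eq_iff[OF ideal_subgroup_A[OF ideal_K]] .

lemma N_decompose:
  assumes n: "n \<in> N"
  obtains i k where "i \<in> K" "n = i \<otimes>\<^bsub>A\<^esub> x [^]\<^bsub>A\<^esub> (k::int)"
proof -
  obtain k :: int where "K #>\<^bsub>A\<^esub> n = K #>\<^bsub>A\<^esub> (x [^]\<^bsub>A\<^esub> k)" using cosets_pow[OF n] by blast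
  moreover have n_carrier: "n \<in> carrier A" using n ideal_subset[OF ideal_N] by blast
  ultimately have "n \<otimes>\<^bsub>A\<^esub> inv\<^bsub>A\<^esub> (x [^]\<^bsub>A\<^esub> k) \<in> K" by (simp add: coset_K_eq_iff)
  moreover have "n = (n \<otimes>\<^bsub>A\<^esub> inv\<^bsub>A\<^esub> (x [^]\<^bsub>A\<^esub> k)) \<otimes>\<^bsub>A\<^esub> x [^]\<^bsub>A\<^esub> k"
    using n_carrier by (simp add: A.m_assoc)
  ultimately show ?thesis using that by blast
qed

lemma coset_mult_eq_add:
  "z \<in> N \<Longrightarrow> b \<in> carrier A \<Longrightarrow> K #>\<^bsub>A\<^esub> (z \<otimes>\<^bsub>M\<^esub> b) = K #>\<^bsub>A\<^esub> (z \<otimes>\<^bsub>A\<^esub> b)"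
  using socle_coset_mult_eq_add[OF ideal_K _ _ cosets_socle] ideal_subset[OF ideal_N] by blast

lemma coset_add_commute:
  "z \<in> N \<Longrightarrow> b \<in> carrier A \<Longrightarrow> K #>\<^bsub>A\<^esub> (z \<otimes>\<^bsub>A\<^esub> b) = K #>\<^bsub>A\<^esub> (b \<otimes>\<^bsub>A\<^esub> z)"
  using socle_coset_add_commute[OF ideal_K _ _ cosets_socle] ideal_subset[OF ideal_N] by blast

lemma brace_ideal_if_normal_between:
  assumes J_normal: "J \<lhd> A" and KJ: "K \<subseteq> J" and JN: "J \<subseteq> N"
    and lam_J: "\<And>b z. b \<in> carrier A \<Longrightarrow> z \<in> J \<Longrightarrow> lam b z \<in> J"
  shows "brace_ideal A M J"
proof -
  have J_A: "subgroup J A" using J_normal normal_imp_subgroup by blast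
  have J_carrier: "J \<subseteq> carrier A" using subgroup.subset[OF J_A] .
  have J_M: "subgroup J M" using subgroup_M_if_lam_closed[OF J_A lam_J] .
  have "J \<lhd> M"
  proof (rule M.normal_invI[OF J_M])
    fix b z assume "b \<in> carrier M" and z: "z \<in> J"
    then have b: "b \<in> carrier A" by simp
    have z_carrier: "z \<in> carrier A" using z J_carrier by blast
    define b' where "b' = inv\<^bsub>M\<^esub> b"
    have b': "b' \<in> carrier A" unfolding b'_def using b by simp
    have "K #>\<^bsub>A\<^esub> (z \<otimes>\<^bsub>M\<^esub> b') = K #>\<^bsub>A\<^esub> (z \<otimes>\<^bsub>A\<^esub> b')"
      using coset_mult_eq_add z JN b' by blast
    then obtain i where i: "i \<in> K" "z \<otimes>\<^bsub>M\<^esub> b' \<otimes>\<^bsub>A\<^esub> inv\<^bsub>A\<^esub> (z \<otimes>\<^bsub>A\<^esub> b') = i"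
      using coset_K_eq_iff z_carrier b' by simp
    have i_carrier: "i \<in> carrier A" using i(1) ideal_subset[OF ideal_K] by blast
    define w where "w = i \<otimes>\<^bsub>A\<^esub> z"
    have w: "w \<in> J" unfolding w_def using subgroup.m_closed[OF J_A] KJ i(1) z by blast
    have w_carrier: "w \<in> carrier A" using w J_carrier by blast
    have "z \<otimes>\<^bsub>M\<^esub> b' = w \<otimes>\<^bsub>A\<^esub> b'"
      using i(2) z_carrier b' i_carrier unfolding w_def
      by (metis A.inv_solve_right A.m_assoc A.m_closed mult_M_closed)
    then have "b \<otimes>\<^bsub>M\<^esub> z \<otimes>\<^bsub>M\<^esub> inv\<^bsub>M\<^esub> b = b \<otimes>\<^bsub>M\<^esub> (w \<otimes>\<^bsub>A\<^esub> b')"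
      unfolding b'_def using b z_carrier by (simp add: M.m_assoc)
    also have "\<dots> = b \<otimes>\<^bsub>M\<^esub> w \<otimes>\<^bsub>A\<^esub> inv\<^bsub>A\<^esub> b"
      using mult_add_distrib[OF b w_carrier b'] b w_carrier unfolding b'_def by simp
    also have "\<dots> = b \<otimes>\<^bsub>A\<^esub> lam b w \<otimes>\<^bsub>A\<^esub> inv\<^bsub>A\<^esub> b"
      using mult_eq_add_lam[OF b w_carrier] by simp
    finally show "b \<otimes>\<^bsub>M\<^esub> z \<otimes>\<^bsub>M\<^esub> inv\<^bsub>M\<^esub> b \<in> J"
      using A.normal_invE(2)[OF J_normal b lam_J[OF b w]] by simp
  qed
  then show ?thesis
    unfolding brace_ideal_def subbrace_def using J_A J_M J_normal lam_J by blast
qed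

lemma quotient_hom: "group_hom A (A Mod K) (\<lambda>a. K #>\<^bsub>A\<^esub> a)"
  using normal.r_coset_hom_Mod[OF ideal_normal_A[OF ideal_K]]
    normal.factorgroup_is_group[OF ideal_normal_A[OF ideal_K]] A.is_group
  unfolding group_hom_def group_hom_axioms_def by blast

definition pow_preimage :: "int \<Rightarrow> 'a set" where
  "pow_preimage q = {z \<in> carrier A. \<exists>k::int. K #>\<^bsub>A\<^esub> z = K #>\<^bsub>A\<^esub> (x [^]\<^bsub>A\<^esub> (q * k))}"

lemma pow_mem_pow_preimage: "x [^]\<^bsub>A\<^esub> (q * k) \<in> pow_preimage q"
  unfolding pow_preimage_def by auto

lemma pow_preimage_subset_N: "pow_preimage q \<subseteq> N"
proof
  fix z assume "z \<in> pow_preimage q"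
  then obtain k where z: "z \<in> carrier A" "K #>\<^bsub>A\<^esub> z = K #>\<^bsub>A\<^esub> (x [^]\<^bsub>A\<^esub> (q * k))"
    unfolding pow_preimage_def by blast
  then have "z \<otimes>\<^bsub>A\<^esub> inv\<^bsub>A\<^esub> (x [^]\<^bsub>A\<^esub> (q * k)) \<in> N"
    using coset_K_eq_iff K_subset_N by auto
  then have "z \<otimes>\<^bsub>A\<^esub> inv\<^bsub>A\<^esub> (x [^]\<^bsub>A\<^esub> (q * k)) \<otimes>\<^bsub>A\<^esub> x [^]\<^bsub>A\<^esub> (q * k) \<in> N"
    using subgroup.m_closed[OF ideal_subgroup_A[OF ideal_N] _ pow_in_N] by blast
  then show "z \<in> N" using z(1) by (simp add: A.m_assoc)
qed

lemma K_subset_pow_preimage: "K \<subseteq> pow_preimage q"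
proof
  fix i assume i: "i \<in> K"
  then have "i \<in> carrier A" using ideal_subset[OF ideal_K] by blast
  moreover have "K #>\<^bsub>A\<^esub> i = K #>\<^bsub>A\<^esub> (x [^]\<^bsub>A\<^esub> (q * 0))"
    using A.coset_join2[OF _ ideal_subgroup_A[OF ideal_K] i] calculation ideal_subset[OF ideal_K]
    by simp
  ultimately show "i \<in> pow_preimage q" unfolding pow_preimage_def by blast
qed

lemma subgroup_pow_preimage: "subgroup (pow_preimage q) A"
proof -
  interpret h: group_hom A "A Mod K" "\<lambda>a. K #>\<^bsub>A\<^esub> a" by (rule quotient_hom)
  show ?thesis
  proof (rule A.subgroupI)
    show "pow_preimage q \<subseteq> carrier A" unfolding pow_preimage_def by blast
    show "pow_preimage q \<noteq> {}" using pow_mem_pow_preimage by blast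
    show "inv\<^bsub>A\<^esub> z \<in> pow_preimage q" if z_mem: "z \<in> pow_preimage q" for z
    proof -
      obtain k where z: "z \<in> carrier A" "K #>\<^bsub>A\<^esub> z = K #>\<^bsub>A\<^esub> (x [^]\<^bsub>A\<^esub> (q * k))"
        using z_mem unfolding pow_preimage_def by blast
      have "K #>\<^bsub>A\<^esub> inv\<^bsub>A\<^esub> z = K #>\<^bsub>A\<^esub> inv\<^bsub>A\<^esub> (x [^]\<^bsub>A\<^esub> (q * k))"
        using h.hom_inv z by simp
      also have "inv\<^bsub>A\<^esub> (x [^]\<^bsub>A\<^esub> (q * k)) = x [^]\<^bsub>A\<^esub> (q * - k)"
        using A.int_pow_neg[OF x_carrier, of "q * k"] by simp
      finally show ?thesis using z(1) unfolding pow_preimage_def by blast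
    qed
    show "a \<otimes>\<^bsub>A\<^esub> b \<in> pow_preimage q" if ab_mem: "a \<in> pow_preimage q" "b \<in> pow_preimage q" for a b
    proof -
      obtain k l where a: "a \<in> carrier A" "K #>\<^bsub>A\<^esub> a = K #>\<^bsub>A\<^esub> (x [^]\<^bsub>A\<^esub> (q * k))"
        and b: "b \<in> carrier A" "K #>\<^bsub>A\<^esub> b = K #>\<^bsub>A\<^esub> (x [^]\<^bsub>A\<^esub> (q * l))"
        using ab_mem unfolding pow_preimage_def by blast
      have "K #>\<^bsub>A\<^esub> (a \<otimes>\<^bsub>A\<^esub> b) = K #>\<^bsub>A\<^esub> (x [^]\<^bsub>A\<^esub> (q * k) \<otimes>\<^bsub>A\<^esub> x [^]\<^bsub>A\<^esub> (q * l))"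
        using h.hom_mult a b by simp
      also have "x [^]\<^bsub>A\<^esub> (q * k) \<otimes>\<^bsub>A\<^esub> x [^]\<^bsub>A\<^esub> (q * l) = x [^]\<^bsub>A\<^esub> (q * (k + l))"
        using A.int_pow_mult[OF x_carrier, of "q * k" "q * l"] by (simp add: distrib_left)
      finally show ?thesis using a(1) b(1) unfolding pow_preimage_def by blast
    qed
  qed
qed

lemma normal_pow_preimage: "pow_preimage q \<lhd> A"
proof (rule A.normal_invI[OF subgroup_pow_preimage])
  fix b z assume b: "b \<in> carrier A" and z: "z \<in> pow_preimage q"
  have z_carrier: "z \<in> carrier A" using z unfolding pow_preimage_def by blast
  have rcos_sum: "K #>\<^bsub>A\<^esub> (c \<otimes>\<^bsub>A\<^esub> d) = (K #>\<^bsub>A\<^esub> c) <#>\<^bsub>A\<^esub> (K #>\<^bsub>A\<^esub> d)"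
    if "c \<in> carrier A" "d \<in> carrier A" for c d
    using normal.rcos_sum[OF ideal_normal_A[OF ideal_K] that] by simp
  have "K #>\<^bsub>A\<^esub> (b \<otimes>\<^bsub>A\<^esub> z \<otimes>\<^bsub>A\<^esub> inv\<^bsub>A\<^esub> b)
      = (K #>\<^bsub>A\<^esub> b) <#>\<^bsub>A\<^esub> (K #>\<^bsub>A\<^esub> (z \<otimes>\<^bsub>A\<^esub> inv\<^bsub>A\<^esub> b))"
    using rcos_sum b z_carrier by (simp add: A.m_assoc)
  also have "\<dots> = (K #>\<^bsub>A\<^esub> b) <#>\<^bsub>A\<^esub> (K #>\<^bsub>A\<^esub> (inv\<^bsub>A\<^esub> b \<otimes>\<^bsub>A\<^esub> z))"
    using coset_add_commute[OF _ A.inv_closed[OF b]] z pow_preimage_subset_N by (metis subsetD)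
  also have "\<dots> = K #>\<^bsub>A\<^esub> (b \<otimes>\<^bsub>A\<^esub> (inv\<^bsub>A\<^esub> b \<otimes>\<^bsub>A\<^esub> z))"
    using rcos_sum b z_carrier by simp
  also have "b \<otimes>\<^bsub>A\<^esub> (inv\<^bsub>A\<^esub> b \<otimes>\<^bsub>A\<^esub> z) = z"
    using b z_carrier by (simp add: A.m_assoc[symmetric])
  finally show "b \<otimes>\<^bsub>A\<^esub> z \<otimes>\<^bsub>A\<^esub> inv\<^bsub>A\<^esub> b \<in> pow_preimage q"
    using z b z_carrier unfolding pow_preimage_def by auto
qed

lemma lam_pow_preimage:
  assumes b: "b \<in> carrier A" and z: "z \<in> pow_preimage q"
  shows "lam b z \<in> pow_preimage q"
proof -
  interpret h: group_hom A "A Mod K" "\<lambda>a. K #>\<^bsub>A\<^esub> a" by (rule quotient_hom)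
  obtain k where z: "z \<in> carrier A" "K #>\<^bsub>A\<^esub> z = K #>\<^bsub>A\<^esub> (x [^]\<^bsub>A\<^esub> (q * k))"
    using assms unfolding pow_preimage_def by blast
  obtain t :: int where t: "K #>\<^bsub>A\<^esub> lam b x = K #>\<^bsub>A\<^esub> (x [^]\<^bsub>A\<^esub> t)"
    using cosets_pow ideal_lam_closed[OF ideal_N b x_in_N] by blast
  have "z \<otimes>\<^bsub>A\<^esub> inv\<^bsub>A\<^esub> (x [^]\<^bsub>A\<^esub> (q * k)) \<in> K"
    using z coset_K_eq_iff by simp
  then have "lam b (z \<otimes>\<^bsub>A\<^esub> inv\<^bsub>A\<^esub> (x [^]\<^bsub>A\<^esub> (q * k))) \<in> K"
    using ideal_lam_closed[OF ideal_K b] by blast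
  then have "K #>\<^bsub>A\<^esub> lam b z = K #>\<^bsub>A\<^esub> lam b (x [^]\<^bsub>A\<^esub> (q * k))"
    using b z(1) by (simp add: coset_K_eq_iff lam_add lam_inv_A)
  also have "\<dots> = (K #>\<^bsub>A\<^esub> lam b x) [^]\<^bsub>A Mod K\<^esub> (q * k)"
    using b lam_int_pow h.hom_int_pow by simp
  also have "\<dots> = K #>\<^bsub>A\<^esub> ((x [^]\<^bsub>A\<^esub> t) [^]\<^bsub>A\<^esub> (q * k))"
    using t h.hom_int_pow by simp
  also have "(x [^]\<^bsub>A\<^esub> t) [^]\<^bsub>A\<^esub> (q * k) = x [^]\<^bsub>A\<^esub> (q * (t * k))"
    using A.int_pow_pow[OF x_carrier] by (simp add: ac_simps)
  finally show ?thesis using b z(1) unfolding pow_preimage_def by auto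
qed

lemma brace_ideal_pow_preimage: "brace_ideal A M (pow_preimage q)"
  using brace_ideal_if_normal_between[OF normal_pow_preimage K_subset_pow_preimage pow_preimage_subset_N]
    lam_pow_preimage by blast

lemma rcos_A_eq_rcos_M:
  assumes D_A: "subgroup D A" and D_M: "subgroup D M" and KD: "K \<subseteq> D" and DN: "D \<subseteq> N"
    and n: "n \<in> N"
  shows "D #>\<^bsub>A\<^esub> n = D #>\<^bsub>M\<^esub> n"
proof -
  have n_carrier: "n \<in> carrier A" using n ideal_subset[OF ideal_N] by blast
  have K_carrier: "K \<subseteq> carrier A" using ideal_subset[OF ideal_K] .
  have D_carrier: "D \<subseteq> carrier A" using subgroup.subset[OF D_A] .
  have same_K_coset: "K #>\<^bsub>A\<^esub> (d \<otimes>\<^bsub>A\<^esub> n) = K #>\<^bsub>M\<^esub> (d \<otimes>\<^bsub>M\<^esub> n)" if d: "d \<in> D" for d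
    using coset_mult_eq_add[OF _ n_carrier] ideal_rcos_eq[OF ideal_K] d DN D_carrier n_carrier
    by (metis mult_M_closed subsetD)
  show ?thesis
  proof
    show "D #>\<^bsub>A\<^esub> n \<subseteq> D #>\<^bsub>M\<^esub> n"
    proof
      fix y assume "y \<in> D #>\<^bsub>A\<^esub> n"
      then obtain d where d: "d \<in> D" "y = d \<otimes>\<^bsub>A\<^esub> n" unfolding r_coset_def by blast
      then have dc: "d \<in> carrier A" using D_carrier by blast
      have "y \<in> K #>\<^bsub>A\<^esub> (d \<otimes>\<^bsub>A\<^esub> n)"
        using A.rcos_self[OF A.m_closed[OF dc n_carrier] ideal_subgroup_A[OF ideal_K]] d(2) by simp
      then have "y \<in> K #>\<^bsub>M\<^esub> (d \<otimes>\<^bsub>M\<^esub> n)" using same_K_coset[OF d(1)] by simp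
      then obtain i where i: "i \<in> K" "y = i \<otimes>\<^bsub>M\<^esub> (d \<otimes>\<^bsub>M\<^esub> n)" unfolding r_coset_def by blast
      then have "y = (i \<otimes>\<^bsub>M\<^esub> d) \<otimes>\<^bsub>M\<^esub> n" using K_carrier dc n_carrier by (simp add: M.m_assoc subset_iff)
      moreover have "i \<otimes>\<^bsub>M\<^esub> d \<in> D" using subgroup.m_closed[OF D_M] i(1) KD d(1) by blast
      ultimately show "y \<in> D #>\<^bsub>M\<^esub> n" unfolding r_coset_def by blast
    qed
    show "D #>\<^bsub>M\<^esub> n \<subseteq> D #>\<^bsub>A\<^esub> n"
    proof
      fix y assume "y \<in> D #>\<^bsub>M\<^esub> n"
      then obtain d where d: "d \<in> D" "y = d \<otimes>\<^bsub>M\<^esub> n" unfolding r_coset_def by blast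
      then have dc: "d \<in> carrier A" using D_carrier by blast
      have "y \<in> K #>\<^bsub>M\<^esub> (d \<otimes>\<^bsub>M\<^esub> n)"
        using M.rcos_self[OF _ ideal_subgroup_M[OF ideal_K]] d(2) dc n_carrier by simp
      then have "y \<in> K #>\<^bsub>A\<^esub> (d \<otimes>\<^bsub>A\<^esub> n)" using same_K_coset[OF d(1)] by simp
      then obtain i where i: "i \<in> K" "y = i \<otimes>\<^bsub>A\<^esub> (d \<otimes>\<^bsub>A\<^esub> n)" unfolding r_coset_def by blast
      then have "y = (i \<otimes>\<^bsub>A\<^esub> d) \<otimes>\<^bsub>A\<^esub> n" using K_carrier dc n_carrier by (simp add: A.m_assoc subset_iff)
      moreover have "i \<otimes>\<^bsub>A\<^esub> d \<in> D" using subgroup.m_closed[OF D_A] i(1) KD d(1) by blast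
      ultimately show "y \<in> D #>\<^bsub>A\<^esub> n" unfolding r_coset_def by blast
    qed
  qed
qed

lemma card_rcosets_eq_exponent:
  fixes m :: int
  assumes D: "subgroup D A" and KD: "K \<subseteq> D" and m: "m > 0"
    and exponents: "\<And>k. x [^]\<^bsub>A\<^esub> k \<in> D \<longleftrightarrow> m dvd k"
  shows "card ((\<lambda>n. D #>\<^bsub>A\<^esub> n) ` N) = nat m"
proof -
  have coset_pow_eq_iff: "D #>\<^bsub>A\<^esub> x [^]\<^bsub>A\<^esub> a = D #>\<^bsub>A\<^esub> x [^]\<^bsub>A\<^esub> b \<longleftrightarrow> m dvd a - b" for a b :: int
    using A.rcos_eq_iff[OF D] A.int_pow_diff[OF x_carrier, symmetric] exponents by simp
  have "(\<lambda>n. D #>\<^bsub>A\<^esub> n) ` N = (\<lambda>k. D #>\<^bsub>A\<^esub> x [^]\<^bsub>A\<^esub> k) ` {0..<m}"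
  proof
    show "(\<lambda>k. D #>\<^bsub>A\<^esub> x [^]\<^bsub>A\<^esub> k) ` {0..<m} \<subseteq> (\<lambda>n. D #>\<^bsub>A\<^esub> n) ` N"
      using pow_in_N by blast
    show "(\<lambda>n. D #>\<^bsub>A\<^esub> n) ` N \<subseteq> (\<lambda>k. D #>\<^bsub>A\<^esub> x [^]\<^bsub>A\<^esub> k) ` {0..<m}"
    proof clarify
      fix n assume "n \<in> N"
      then obtain i k where i: "i \<in> K" and n: "n = i \<otimes>\<^bsub>A\<^esub> x [^]\<^bsub>A\<^esub> (k::int)"
        by (rule N_decompose)
      have i_carrier: "i \<in> carrier A" using i ideal_subset[OF ideal_K] by blast
      have "D #>\<^bsub>A\<^esub> n = (D #>\<^bsub>A\<^esub> i) #>\<^bsub>A\<^esub> x [^]\<^bsub>A\<^esub> k"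
        using n A.coset_mult_assoc[OF subgroup.subset[OF D] i_carrier] by simp
      also have "D #>\<^bsub>A\<^esub> i = D"
        using A.coset_join2[OF i_carrier D] i KD by blast
      also have "D #>\<^bsub>A\<^esub> x [^]\<^bsub>A\<^esub> k = D #>\<^bsub>A\<^esub> x [^]\<^bsub>A\<^esub> (k mod m)"
        using coset_pow_eq_iff mod_eq_dvd_iff[of k m "k mod m"] by simp
      finally show "D #>\<^bsub>A\<^esub> n \<in> (\<lambda>k. D #>\<^bsub>A\<^esub> x [^]\<^bsub>A\<^esub> k) ` {0..<m}"
        using m by auto
    qed
  qed
  moreover have "inj_on (\<lambda>k. D #>\<^bsub>A\<^esub> x [^]\<^bsub>A\<^esub> k) {0..<m}"
  proof (rule inj_onI)
    fix a b assume "a \<in> {0..<m}" "b \<in> {0..<m}"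
      and "D #>\<^bsub>A\<^esub> x [^]\<^bsub>A\<^esub> a = D #>\<^bsub>A\<^esub> x [^]\<^bsub>A\<^esub> b"
    then show "a = b"
      using coset_pow_eq_iff mod_eq_dvd_iff[of a m b] by auto
  qed
  ultimately show ?thesis by (simp add: card_image)
qed

lemma gen_notin_mult_pow_preimage:
  fixes m q :: int
  assumes C: "subgroup C A" and KC: "K \<subseteq> C"
    and exponents: "\<And>k. x [^]\<^bsub>A\<^esub> k \<in> C \<longleftrightarrow> m dvd k"
    and qm: "q dvd m" and q: "\<not> q dvd 1"
  shows "x \<notin> C <#>\<^bsub>A\<^esub> pow_preimage q"
proof
  assume "x \<in> C <#>\<^bsub>A\<^esub> pow_preimage q"
  then obtain c z where c: "c \<in> C" and z: "z \<in> pow_preimage q" and x_eq: "x = c \<otimes>\<^bsub>A\<^esub> z"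
    unfolding set_mult_def by blast
  then obtain k where z_carrier: "z \<in> carrier A"
    and "K #>\<^bsub>A\<^esub> z = K #>\<^bsub>A\<^esub> x [^]\<^bsub>A\<^esub> (q * k)"
    unfolding pow_preimage_def by blast
  then have "z \<otimes>\<^bsub>A\<^esub> inv\<^bsub>A\<^esub> (x [^]\<^bsub>A\<^esub> (q * k)) \<in> C"
    using coset_K_eq_iff KC by auto
  then have "c \<otimes>\<^bsub>A\<^esub> (z \<otimes>\<^bsub>A\<^esub> inv\<^bsub>A\<^esub> (x [^]\<^bsub>A\<^esub> (q * k))) \<in> C"
    using subgroup.m_closed[OF C c] by blast
  moreover have "c \<otimes>\<^bsub>A\<^esub> (z \<otimes>\<^bsub>A\<^esub> inv\<^bsub>A\<^esub> (x [^]\<^bsub>A\<^esub> (q * k))) = x [^]\<^bsub>A\<^esub> (1 - q * k)"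
    using x_eq c z_carrier subgroup.mem_carrier[OF C c] A.int_pow_diff[OF x_carrier, of 1 "q * k"]
    by (simp add: A.m_assoc)
  ultimately have "q dvd 1 - q * k" using exponents qm dvd_trans by metis
  then have "q dvd (1 - q * k) + q * k" by (rule dvd_add) simp
  then have "q dvd 1" by simp
  with q show False ..
qed

lemma pow_in_maximal_subbrace:
  fixes m q :: int
  assumes C: "maximal_subbrace A M C" and KC: "K \<subseteq> C"
    and exponents: "\<And>k. x [^]\<^bsub>A\<^esub> k \<in> C \<longleftrightarrow> m dvd k"
    and qm: "q dvd m" and q: "\<not> q dvd 1"
  shows "x [^]\<^bsub>A\<^esub> q \<in> C"
proof -
  have C_sub: "subbrace A M C" using C unfolding maximal_subbrace_def by blast
  have C_A: "subgroup C A" using C_sub unfolding subbrace_def by blast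
  define T where "T = C <#>\<^bsub>A\<^esub> pow_preimage q"
  have T: "subbrace A M T"
    unfolding T_def using subbrace_set_mult_ideal[OF C_sub brace_ideal_pow_preimage] .
  have CT: "C \<subseteq> T"
  proof
    fix c assume "c \<in> C"
    then have "c \<otimes>\<^bsub>A\<^esub> x [^]\<^bsub>A\<^esub> (q * 0) \<in> T"
      unfolding T_def set_mult_def using pow_mem_pow_preimage by blast
    then show "c \<in> T" using \<open>c \<in> C\<close> subgroup.mem_carrier[OF C_A] by simp
  qed
  have "x \<notin> T"
    unfolding T_def using gen_notin_mult_pow_preimage[OF C_A KC exponents qm q] .
  then have "T = C" using C T CT x_carrier unfolding maximal_subbrace_def by blast
  moreover have "\<one>\<^bsub>A\<^esub> \<otimes>\<^bsub>A\<^esub> x [^]\<^bsub>A\<^esub> (q * 1) \<in> T"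
    unfolding T_def set_mult_def using subgroup.one_closed[OF C_A] pow_mem_pow_preimage by blast
  ultimately show ?thesis by simp
qed

lemma exponent_prime_if_maximal:
  fixes m :: int
  assumes C: "maximal_subbrace A M C" and KC: "K \<subseteq> C" and NC: "\<not> N \<subseteq> C"
    and m: "m \<ge> 0" and exponents: "\<And>k. x [^]\<^bsub>A\<^esub> k \<in> C \<longleftrightarrow> m dvd k"
  shows "Factorial_Ring.prime m"
proof -
  have C_A: "subgroup C A" using C unfolding maximal_subbrace_def subbrace_def by blast
  have "m \<noteq> 1"
  proof
    assume "m = 1"
    have "n \<in> C" if n_N: "n \<in> N" for n
    proof -
      obtain i k where i: "i \<in> K" and n: "n = i \<otimes>\<^bsub>A\<^esub> x [^]\<^bsub>A\<^esub> (k::int)"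
        using N_decompose[OF n_N] .
      have "x [^]\<^bsub>A\<^esub> k \<in> C" using exponents \<open>m = 1\<close> by simp
      then show ?thesis using subgroup.m_closed[OF C_A] i KC n by blast
    qed
    with NC show False by blast
  qed
  moreover have "m \<noteq> 0"
  proof
    assume "m = 0"
    then have "x [^]\<^bsub>A\<^esub> (2::int) \<in> C"
      using pow_in_maximal_subbrace[OF C KC exponents, of 2] by simp
    then show False using exponents \<open>m = 0\<close> by simp
  qed
  moreover have "d = 1 \<or> d = m" if d: "d \<ge> 0" "d dvd m" for d
  proof (cases "d dvd 1")
    case True
    then show ?thesis using d(1) by simp
  next
    case False
    then have "m dvd d" using pow_in_maximal_subbrace[OF C KC exponents d(2)] exponents by blast
    then show ?thesis using zdvd_antisym_nonneg[OF d(1) m d(2)] by blast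
  qed
  ultimately show ?thesis using m by (auto simp: prime_int_iff)
qed

lemma maximal_subbrace_factor_index:
  assumes C: "maximal_subbrace A M C" and KC: "K \<subseteq> C" and NC: "\<not> N \<subseteq> C"
  shows "Factorial_Ring.prime (card ((\<lambda>n. (C \<inter> N) #>\<^bsub>A\<^esub> n) ` N))"
    and "\<forall>n\<in>N. (C \<inter> N) #>\<^bsub>A\<^esub> n = (C \<inter> N) #>\<^bsub>M\<^esub> n"
proof -
  have C_A: "subgroup C A" and C_M: "subgroup C M"
    using C unfolding maximal_subbrace_def subbrace_def by auto
  have CN_A: "subgroup (C \<inter> N) A"
    using A.subgroups_Inter_pair[OF C_A ideal_subgroup_A[OF ideal_N]] .
  have CN_M: "subgroup (C \<inter> N) M"
    using M.subgroups_Inter_pair[OF C_M ideal_subgroup_M[OF ideal_N]] .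
  have K_CN: "K \<subseteq> C \<inter> N" using KC K_subset_N by blast
  obtain m :: int where m: "m \<ge> 0" and exponents: "\<And>k. x [^]\<^bsub>A\<^esub> k \<in> C \<longleftrightarrow> m dvd k"
    using A.int_pow_mem_subgroup_iff_dvd[OF C_A x_carrier] by blast
  have prime_m: "Factorial_Ring.prime m" using exponent_prime_if_maximal[OF C KC NC m exponents] .
  have "x [^]\<^bsub>A\<^esub> k \<in> C \<inter> N \<longleftrightarrow> m dvd k" for k :: int
    using exponents pow_in_N by blast
  then have "card ((\<lambda>n. (C \<inter> N) #>\<^bsub>A\<^esub> n) ` N) = nat m"
    using card_rcosets_eq_exponent[OF CN_A K_CN prime_gt_0_int[OF prime_m]] by blast
  then show "Factorial_Ring.prime (card ((\<lambda>n. (C \<inter> N) #>\<^bsub>A\<^esub> n) ` N))"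
    using prime_m by simp
  show "\<forall>n\<in>N. (C \<inter> N) #>\<^bsub>A\<^esub> n = (C \<inter> N) #>\<^bsub>M\<^esub> n"
    using rcos_A_eq_rcos_M[OF CN_A CN_M K_CN] by blast
qed

end

section \<open>Maximal subbraces of supersoluble braces\<close>

definition supersoluble_factor :: "'a monoid \<Rightarrow> 'a monoid \<Rightarrow> 'a set \<Rightarrow> 'a set \<Rightarrow> bool" where
  "supersoluble_factor A M I J \<longleftrightarrow>
     (infinite_cyclic_subset (A Mod I) (brace_quot_set A I J) \<and>
      brace_quot_set A I J \<subseteq> brace_socle (A Mod I) (M Mod I))
     \<or> Factorial_Ring.prime (card (brace_quot_set A I J))"

lemma supersoluble_factor_crossing:
  assumes "supersoluble_brace A M" and "\<one>\<^bsub>A\<^esub> \<in> C" and "\<not> carrier A \<subseteq> C"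
  obtains K N where "brace_ideal A M K" "brace_ideal A M N" "K \<subseteq> N" "K \<subseteq> C" "\<not> N \<subseteq> C"
    "supersoluble_factor A M K N"
proof -
  obtain I :: "nat \<Rightarrow> 'a set" and n where I_0: "I 0 = {\<one>\<^bsub>A\<^esub>}" and I_n: "I n = carrier A"
    and ideals: "\<forall>i\<le>n. brace_ideal A M (I i)"
    and series: "\<forall>i<n. I i \<subseteq> I (Suc i) \<and> supersoluble_factor A M (I i) (I (Suc i))"
    using assms(1) unfolding supersoluble_brace_def supersoluble_factor_def by blast
  have "\<not> I n \<subseteq> C" and "\<not> \<not> I 0 \<subseteq> C" using I_0 I_n assms(2,3) by auto
  then obtain j where j: "j < n" "\<forall>i\<le>j. \<not> \<not> I i \<subseteq> C" "\<not> I (Suc j) \<subseteq> C"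
    using ex_least_nat_less[of "\<lambda>i. \<not> I i \<subseteq> C" n] by blast
  then show ?thesis using that[of "I j" "I (Suc j)"] ideals series by auto
qed

context brace
begin

lemma central_cyclic_factorI:
  assumes K: "brace_ideal A M K" and N: "brace_ideal A M N" and KN: "K \<subseteq> N"
    and cyclic: "infinite_cyclic_subset (A Mod K) (brace_quot_set A K N)"
    and central: "brace_quot_set A K N \<subseteq> brace_socle (A Mod K) (M Mod K)"
  obtains x where "central_cyclic_factor A M K N x"
proof -
  obtain g where g: "g \<in> brace_quot_set A K N"
    and generated: "brace_quot_set A K N = range (\<lambda>k::int. g [^]\<^bsub>A Mod K\<^esub> k)"
    using cyclic unfolding infinite_cyclic_subset_def by blast
  obtain x where x: "x \<in> N" and g_eq: "g = K #>\<^bsub>A\<^esub> x"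
    using g unfolding brace_quot_set_def by blast
  have x_carrier: "x \<in> carrier A" using x ideal_subset[OF N] by blast
  have "\<exists>k::int. K #>\<^bsub>A\<^esub> n = K #>\<^bsub>A\<^esub> (x [^]\<^bsub>A\<^esub> k)" if "n \<in> N" for n
  proof -
    have "K #>\<^bsub>A\<^esub> n \<in> brace_quot_set A K N" using that unfolding brace_quot_set_def by blast
    then obtain k :: int where "K #>\<^bsub>A\<^esub> n = g [^]\<^bsub>A Mod K\<^esub> k" using generated by blast
    also have "g [^]\<^bsub>A Mod K\<^esub> k = K #>\<^bsub>A\<^esub> (x [^]\<^bsub>A\<^esub> k)"
      unfolding g_eq by (rule normal.FactGroup_int_pow[OF ideal_normal_A[OF K] x_carrier])
    finally show ?thesis by blast
  qed
  moreover have "K #>\<^bsub>A\<^esub> n \<in> brace_socle (A Mod K) (M Mod K)" if "n \<in> N" for n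
    using that central unfolding brace_quot_set_def by blast
  ultimately have "central_cyclic_factor A M K N x"
    using K N KN x by unfold_locales
  then show ?thesis by (rule that)
qed

lemma maximal_subbrace_index_prime:
  assumes C: "maximal_subbrace A M C"
    and K: "brace_ideal A M K" and N: "brace_ideal A M N" and KN: "K \<subseteq> N"
    and KC: "K \<subseteq> C" and NC: "\<not> N \<subseteq> C"
    and factor: "supersoluble_factor A M K N"
  shows "Factorial_Ring.prime (card (rcosets\<^bsub>A\<^esub> C))"
    and "card (rcosets\<^bsub>M\<^esub> C) = card (rcosets\<^bsub>A\<^esub> C)"
proof -
  have C_sub: "subbrace A M C" and C_A: "subgroup C A" and C_M: "subgroup C M"
    using C unfolding maximal_subbrace_def subbrace_def by auto
  have inter_index: "Factorial_Ring.prime (card ((\<lambda>n. (C \<inter> N) #>\<^bsub>A\<^esub> n) ` N))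
      \<and> (\<forall>n\<in>N. (C \<inter> N) #>\<^bsub>A\<^esub> n = (C \<inter> N) #>\<^bsub>M\<^esub> n)"
    using factor unfolding supersoluble_factor_def
  proof
    assume "infinite_cyclic_subset (A Mod K) (brace_quot_set A K N) \<and>
      brace_quot_set A K N \<subseteq> brace_socle (A Mod K) (M Mod K)"
    then obtain x where "central_cyclic_factor A M K N x"
      using central_cyclic_factorI[OF K N KN] by blast
    then show ?thesis using central_cyclic_factor.maximal_subbrace_factor_index[OF _ C KC NC] by blast
  next
    assume p: "Factorial_Ring.prime (card (brace_quot_set A K N))"
    have CN: "C \<inter> N = K" using inter_eq_if_prime_factor[OF K N KN p C_sub KC NC] .
    show ?thesis
      using p ideal_rcos_eq[OF K] ideal_subset[OF N] unfolding CN brace_quot_set_def by auto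
  qed
  have CN_A: "C <#>\<^bsub>A\<^esub> N = carrier A" using maximal_subbrace_mult_ideal[OF C N NC] .
  then have CN_M: "C <#>\<^bsub>M\<^esub> N = carrier M"
    using set_mult_ideal_eq[OF subgroup.subset[OF C_A] N] by simp
  have index_A: "card (rcosets\<^bsub>A\<^esub> C) = card ((\<lambda>n. (C \<inter> N) #>\<^bsub>A\<^esub> n) ` N)"
    using A.card_rcosets_eq_card_rcosets_inter[OF C_A ideal_subgroup_A[OF N] CN_A] .
  have index_M: "card (rcosets\<^bsub>M\<^esub> C) = card ((\<lambda>n. (C \<inter> N) #>\<^bsub>M\<^esub> n) ` N)"
    using M.card_rcosets_eq_card_rcosets_inter[OF C_M ideal_subgroup_M[OF N] CN_M] .
  show "Factorial_Ring.prime (card (rcosets\<^bsub>A\<^esub> C))" unfolding index_A using inter_index by blast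
  have "(\<lambda>n. (C \<inter> N) #>\<^bsub>M\<^esub> n) ` N = (\<lambda>n. (C \<inter> N) #>\<^bsub>A\<^esub> n) ` N"
    using inter_index by (intro image_cong) auto
  then show "card (rcosets\<^bsub>M\<^esub> C) = card (rcosets\<^bsub>A\<^esub> C)"
    using index_A index_M by simp
qed

end

theorem theorem3p19:
  fixes A M :: "'a monoid" and C :: "'a set"
  assumes "skew_brace A M"
    and "supersoluble_brace A M"
    and "maximal_subbrace A M C"
  shows "Factorial_Ring.prime (card (rcosets\<^bsub>A\<^esub> C)) \<and> card (rcosets\<^bsub>M\<^esub> C) = card (rcosets\<^bsub>A\<^esub> C)
         \<and> maximal_subgroup C A \<and> maximal_subgroup C M"
proof -
  interpret brace A M using assms(1) by (rule brace.intro)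
  have C_A: "subgroup C A" and C_M: "subgroup C M" and C_proper: "C \<noteq> carrier A"
    using assms(3) unfolding maximal_subbrace_def subbrace_def by auto
  obtain K N where "brace_ideal A M K" "brace_ideal A M N" "K \<subseteq> N" "K \<subseteq> C" "\<not> N \<subseteq> C"
    "supersoluble_factor A M K N"
    using supersoluble_factor_crossing[OF assms(2)] subgroup.one_closed[OF C_A]
      C_proper subgroup.subset[OF C_A] by blast
  then have prime_A: "Factorial_Ring.prime (card (rcosets\<^bsub>A\<^esub> C))"
    and index_M: "card (rcosets\<^bsub>M\<^esub> C) = card (rcosets\<^bsub>A\<^esub> C)"
    using maximal_subbrace_index_prime[OF assms(3)] by blast+
  moreover have "maximal_subgroup C A"
    using maximal_subgroup_if_prime_index[OF A.is_group C_A prime_A] .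
  moreover have "maximal_subgroup C M"
    using maximal_subgroup_if_prime_index[OF M.is_group C_M] prime_A index_M by simp
  ultimately show ?thesis by blast
qed

end
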